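(* In the setting of the one-step SNA update below, assume (A1) $T\nu\le\frac14$ and work on the event $\mathcal E=\{\|X^\top\eta\|_\infty/n\le\lambda_u\}$. Let $\kappa=8/5$ and $\tau\in\{\kappa,\kappa+1\}$, and for $\lambda>0$ let $S_{\lambda,\tau}=\{i:|\beta^\dagger_i|\ge\lambda\tau\}$. Let $\bar\lambda=\frac{9}{10}\lambda+\delta_u<\lambda$. Given $(\beta^k,d^k)$ with $A^k=\{i:|\beta^k_i+d^k_i|>\lambda\}$, compute $(\beta^{k+1},d^{k+1})$ by one SNA step and set $A^{k+1}=\{i:|\beta^{k+1}_i+d^{k+1}_i|>\lambda\}$. Let $E^k=A^\dagger\setminus A^k$ and $i_k\in\arg\max_{i\in E^k}|\beta^\dagger_i|$ (similarly $i_{k+1}$ for $E^{k+1}$, with value $0$ if the set is empty). Then: (i) if $S_{\lambda,\tau}\subseteq A^k\subseteq A^\dagger$, then $S_{\lambda,\tau}\subseteq A^{k+1}\subseteq A^\dagger$; (ii) if $S_{\lambda,\kappa+1}\subseteq A^k\subseteq A^\dagger$ and $S_{\lambda,\kappa}\not\subseteq A^k$, then $|\beta^\dagger_{i_k}|>|\beta^\dagger_{i_{k+1}}|$.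
   Context: Model $y=X\beta^\dagger+\eta$, $X\in\mathbb{R}^{n\times p}$ with $\|X_j\|_2^2=n$; $A^\dagger=\operatorname{supp}(\beta^\dagger)$, $T=|A^\dagger|$; $\nu=\max_{i\ne j}|(X^\top X)_{ij}|/n$; $\lambda_u=\sigma\sqrt{2\log(p)/n}$, $\delta_u=3\lambda_u$. One SNA step (with $\alpha=0$) from $(\beta^k,d^k)$: with $B^k=(A^k)^c$, $\beta^{k+1}_{B^k}=0$, $d^{k+1}_{A^k}=(\lambda-\bar\lambda)\operatorname{sgn}(\beta^k_{A^k}+d^k_{A^k})$, $\beta^{k+1}_{A^k}=(X_{A^k}^\top X_{A^k})^{-1}(X_{A^k}^\top y-nd^{k+1}_{A^k})$, $d^{k+1}_{B^k}=X_{B^k}^\top(y-X_{A^k}\beta^{k+1}_{A^k})/n$. *)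

theory Defs
  imports Complex_Main
begin

text \<open>Design matrix X is n x p, given as a function with row index i < n and
column index j < p. Vectors in R^p / R^n are functions nat => real, only
indices below p / n matter.\<close>

definition gram :: "nat \<Rightarrow> (nat \<Rightarrow> nat \<Rightarrow> real) \<Rightarrow> nat \<Rightarrow> nat \<Rightarrow> real" where
  "gram n X i j = (\<Sum>k<n. X k i * X k j)"

definition mutual_coh :: "nat \<Rightarrow> nat \<Rightarrow> (nat \<Rightarrow> nat \<Rightarrow> real) \<Rightarrow> real" where
  "mutual_coh n p X = Max (insert 0 {\<bar>gram n X i j\<bar> / real n | i j. i < p \<and> j < p \<and> i \<noteq> j})"

definition supp_set :: "nat \<Rightarrow> (nat \<Rightarrow> real) \<Rightarrow> nat set" where
  "supp_set p b = {j. j < p \<and> b j \<noteq> 0}"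

definition lambda_u :: "real \<Rightarrow> nat \<Rightarrow> nat \<Rightarrow> real" where
  "lambda_u \<sigma> n p = \<sigma> * sqrt (2 * ln (real p) / real n)"

definition delta_u :: "real \<Rightarrow> nat \<Rightarrow> nat \<Rightarrow> real" where
  "delta_u \<sigma> n p = 3 * lambda_u \<sigma> n p"

definition active_set :: "nat \<Rightarrow> real \<Rightarrow> (nat \<Rightarrow> real) \<Rightarrow> (nat \<Rightarrow> real) \<Rightarrow> nat set" where
  "active_set p lam b d = {i. i < p \<and> \<bar>b i + d i\<bar> > lam}"

definition S_set :: "nat \<Rightarrow> (nat \<Rightarrow> real) \<Rightarrow> real \<Rightarrow> real \<Rightarrow> nat set" where
  "S_set p bd lam \<tau> = {i. i < p \<and> \<bar>bd i\<bar> \<ge> lam * \<tau>}"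

definition max_abs_on :: "(nat \<Rightarrow> real) \<Rightarrow> nat set \<Rightarrow> real" where
  "max_abs_on b E = (if E = {} then 0 else Max ((\<lambda>i. \<bar>b i\<bar>) ` E))"

text \<open>The restricted least-squares part
b'_A = (X_A^T X_A)^{-1} (X_A^T y - n d'_A) is expressed by the (equivalent, when
X_A^T X_A is invertible) normal equations X_A^T X_A b'_A = X_A^T y - n d'_A.\<close>
definition sna_step ::
  "nat \<Rightarrow> nat \<Rightarrow> (nat \<Rightarrow> nat \<Rightarrow> real) \<Rightarrow> (nat \<Rightarrow> real) \<Rightarrow> real \<Rightarrow> real \<Rightarrow>
   (nat \<Rightarrow> real) \<Rightarrow> (nat \<Rightarrow> real) \<Rightarrow> (nat \<Rightarrow> real) \<Rightarrow> (nat \<Rightarrow> real) \<Rightarrow> bool" where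
  "sna_step n p X y lam lambar b d b' d' \<longleftrightarrow>
     (let A = active_set p lam b d in
       (\<forall>j<p. j \<notin> A \<longrightarrow> b' j = 0) \<and>
       (\<forall>j\<in>A. d' j = (lam - lambar) * sgn (b j + d j)) \<and>
       (\<forall>j\<in>A. (\<Sum>l\<in>A. gram n X j l * b' l) = (\<Sum>i<n. X i j * y i) - real n * d' j) \<and>
       (\<forall>j<p. j \<notin> A \<longrightarrow>
          d' j = (\<Sum>i<n. X i j * (y i - (\<Sum>l\<in>A. X i l * b' l))) / real n))"

end

theory Submission
  imports Defs
begin

text \<open>Write \<open>r = \<beta>\<^sup>k\<^sup>+\<^sup>1 - \<beta>\<^sup>\<dagger>\<close> on the active set \<open>A\<close>, \<open>R = \<parallel>r\<^sub>A\<parallel>\<^sub>\<infinity>\<close>, and let \<open>M\<close> be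
  the largest \<open>|\<beta>\<^sup>\<dagger>\<^sub>i|\<close> over the missed part \<open>E = A\<^sup>\<dagger> - A\<close> of the support. Inserting the
  model into the normal equations and into the update of \<open>d\<close> off \<open>A\<close> shows that every
  correlation \<open>|\<beta>\<^sup>k\<^sup>+\<^sup>1\<^sub>j + d\<^sup>k\<^sup>+\<^sup>1\<^sub>j|\<close> differs from \<open>|\<beta>\<^sup>\<dagger>\<^sub>j|\<close> (or from \<open>0\<close> off the support)
  only by off-diagonal Gram terms, each at most \<open>n\<nu>\<close> times \<open>R\<close> or \<open>M\<close>, by the noise \<open>\<lambda>\<^sub>u\<close>
  and by the shrinkage \<open>\<lambda>/10 - \<delta>\<^sub>u\<close> of \<open>d\<close> on \<open>A\<close>. Since \<open>\<nu>(|A| + |E|) \<le> 1/4\<close>, the error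
  bound for \<open>R\<close> is a contraction, and the resulting inequalities decide which coordinates
  cross the threshold \<open>\<lambda>\<close>: large support coordinates enter or stay in \<open>A\<^sup>k\<^sup>+\<^sup>1\<close>, coordinates
  off the support do not, and when some coordinate above \<open>\<kappa>\<lambda>\<close> is still missed, every
  support coordinate at least as large as the current largest missed one becomes active.\<close>

lemma abs_sum_le_card_mult:
  fixes f :: "'a \<Rightarrow> real"
  assumes "\<And>l. l \<in> S \<Longrightarrow> \<bar>f l\<bar> \<le> K"
  shows "\<bar>sum f S\<bar> \<le> real (card S) * K"
proof -
  have "\<bar>sum f S\<bar> \<le> (\<Sum>l\<in>S. \<bar>f l\<bar>)" by (rule sum_abs)
  also have "\<dots> \<le> real (card S) * K" using assms by (rule sum_bounded_above)
  finally show ?thesis .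
qed

lemma abs_le_max_abs_on: "finite E \<Longrightarrow> i \<in> E \<Longrightarrow> \<bar>f i\<bar> \<le> max_abs_on f E"
  unfolding max_abs_on_def by auto

lemma max_abs_on_nonneg: "finite E \<Longrightarrow> 0 \<le> max_abs_on f E"
  unfolding max_abs_on_def by (auto intro: order_trans[OF abs_ge_zero Max_ge])

lemma max_abs_on_le:
  "finite E \<Longrightarrow> 0 \<le> c \<Longrightarrow> (\<And>i. i \<in> E \<Longrightarrow> \<bar>f i\<bar> \<le> c) \<Longrightarrow> max_abs_on f E \<le> c"
  unfolding max_abs_on_def by auto

lemma max_abs_on_less:
  "finite E \<Longrightarrow> 0 < c \<Longrightarrow> (\<And>i. i \<in> E \<Longrightarrow> \<bar>f i\<bar> < c) \<Longrightarrow> max_abs_on f E < c"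
  unfolding max_abs_on_def by auto

lemma gram_diag:
  assumes "\<forall>j<p. (\<Sum>i<n. (X i j)\<^sup>2) = real n" "j < p"
  shows "gram n X j j = real n"
  using assms by (simp add: gram_def power2_eq_square)

lemma finite_off_diagonal_gram:
  "finite {\<bar>gram n X i j\<bar> / real n | i j. i < p \<and> j < p \<and> i \<noteq> j}"
proof (rule finite_subset)
  show "{\<bar>gram n X i j\<bar> / real n | i j. i < p \<and> j < p \<and> i \<noteq> j}
      \<subseteq> (\<lambda>(i, j). \<bar>gram n X i j\<bar> / real n) ` ({..<p} \<times> {..<p})" by auto
qed auto

lemma mutual_coh_nonneg: "0 \<le> mutual_coh n p X"
  unfolding mutual_coh_def using finite_off_diagonal_gram by (intro Max_ge) auto

lemma abs_gram_le_mutual_coh: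
  assumes "0 < n" "j < p" "l < p" "j \<noteq> l"
  shows "\<bar>gram n X j l\<bar> \<le> mutual_coh n p X * real n"
proof -
  have "\<bar>gram n X j l\<bar> / real n \<le> mutual_coh n p X"
    unfolding mutual_coh_def using finite_off_diagonal_gram assms by (intro Max_ge) blast+
  then show ?thesis using assms(1) by (simp add: divide_le_eq)
qed

lemma sum_design_mult_eq_gram:
  "(\<Sum>i<n. X i j * (\<Sum>l\<in>S. X i l * c l)) = (\<Sum>l\<in>S. gram n X j l * c l)"
proof -
  have "(\<Sum>i<n. X i j * (\<Sum>l\<in>S. X i l * c l)) = (\<Sum>i<n. \<Sum>l\<in>S. X i j * X i l * c l)"
    by (simp add: sum_distrib_left mult.assoc)
  also have "\<dots> = (\<Sum>l\<in>S. \<Sum>i<n. X i j * X i l * c l)" by (rule sum.swap)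
  also have "\<dots> = (\<Sum>l\<in>S. gram n X j l * c l)" by (simp add: gram_def sum_distrib_right)
  finally show ?thesis .
qed

lemma abs_gram_sum_le:
  assumes "0 < n" "S \<subseteq> {..<p}" "j < p" "j \<notin> S" "\<And>l. l \<in> S \<Longrightarrow> \<bar>c l\<bar> \<le> K"
  shows "\<bar>\<Sum>l\<in>S. gram n X j l * c l\<bar> \<le> real (card S) * (mutual_coh n p X * real n * K)"
proof (rule abs_sum_le_card_mult)
  fix l assume l: "l \<in> S"
  have "\<bar>gram n X j l\<bar> * \<bar>c l\<bar> \<le> mutual_coh n p X * real n * K"
    using abs_gram_le_mutual_coh[of n j p l X] assms l mutual_coh_nonneg[of n p X]
    by (intro mult_mono) auto
  then show "\<bar>gram n X j l * c l\<bar> \<le> mutual_coh n p X * real n * K" by (simp add: abs_mult)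
qed

lemma err_bound_lt_of_small_max:
  fixes a e R M L u t :: real
  assumes a: "0 \<le> a" "0 \<le> e" "a + e \<le> 1/4" and u: "0 \<le> u" and L: "0 < L"
    and R: "(1 - a) * R \<le> e * M + L/10 - 2 * u"
    and M: "M < t * L" and t: "8/5 \<le> t"
  shows "R < (t - 11/10) * L"
proof -
  have R': "R - a * R \<le> e * M + L/10 - 2 * u" using R by (simp add: algebra_simps)
  have "(1 - a) * R < (1 - a) * ((t - 11/10) * L)"
  proof (cases "e = 0")
    case True
    have "3/4 * (1/2 * L) \<le> (1 - a) * ((t - 11/10) * L)"
      using a t L by (intro mult_mono mult_right_mono) auto
    moreover have "e * M = 0" using True by simp
    ultimately show ?thesis using R L u by linarith
  next
    case False
    then have "e * M < e * (t * L)" using a M by simp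
    moreover have "a * (t * L) + e * (t * L) \<le> t * L / 4"
      using mult_right_mono[OF a(3), of "t * L"] t L by (simp add: algebra_simps)
    moreover have "8/5 * L \<le> t * L" using t L by simp
    moreover have "0 \<le> a * L" using a L by simp
    ultimately have "R - a * R < t * L - a * (t * L) - 11/10 * L + 11/10 * (a * L)"
      using R' u by linarith
    then show ?thesis by (simp add: field_simps)
  qed
  moreover have "0 < 1 - a" using a by linarith
  ultimately show ?thesis by simp
qed

lemma err_bound_lt_of_large_max:
  fixes a e R M L u :: real
  assumes a: "0 \<le> a" "0 \<le> e" "a + e \<le> 1/4" and u: "0 \<le> u" and L: "0 < L"
    and R: "(1 - a) * R \<le> e * M + L/10 - 2 * u"
    and M: "8/5 * L \<le> M" and e: "a = 0 \<Longrightarrow> e = 0"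
  shows "R < M - 11/10 * L"
proof (cases "a = 0")
  case True
  then show ?thesis using e R M L u by simp
next
  case False
  have R': "R - a * R \<le> e * M + L/10 - 2 * u" using R by (simp add: algebra_simps)
  have "0 < a * L" using False a L by simp
  moreover have "a * M + e * M \<le> M / 4"
    using mult_right_mono[OF a(3), of M] M L by (simp add: algebra_simps)
  ultimately have "R - a * R < M - a * M - 11/10 * L + 11/10 * (a * L)"
    using R' M u by linarith
  then have "(1 - a) * R < (1 - a) * (M - 11/10 * L)" by (simp add: field_simps)
  moreover have "0 < 1 - a" using a by linarith
  ultimately show ?thesis by simp
qed

lemma weighted_err_bound:
  fixes a e R M L u :: real
  assumes a: "0 \<le> a" and u: "0 \<le> u" and R: "(1 - a) * R \<le> e * M + L/10 - 2 * u"
  shows "a * R - a * (a * R) \<le> a * (e * M) + a * L / 10"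
proof -
  have "a * ((1 - a) * R) \<le> a * (e * M + L/10 - 2 * u)" using R a by (rule mult_left_mono)
  then have "a * R - a * (a * R) \<le> a * (e * M) + a * L / 10 - 2 * (a * u)"
    by (simp add: algebra_simps)
  moreover have "0 \<le> a * u" using a u by simp
  ultimately show ?thesis by linarith
qed

lemma level_bound_le_of_small_max:
  fixes a e R M L u :: real
  assumes a: "0 \<le> a" "0 \<le> e" "a + e \<le> 1/4" and u: "0 \<le> u" "30 * u < L"
    and R: "(1 - a) * R \<le> e * M + L/10 - 2 * u"
    and M: "M \<le> 13/5 * L"
  shows "e * M + a * R + u \<le> L"
proof -
  have "e * M \<le> 13/5 * (e * L)" using mult_left_mono[OF M a(2)] by (simp add: algebra_simps)
  moreover have "a * L + e * L \<le> L / 4"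
    using mult_right_mono[OF a(3), of L] u by (simp add: algebra_simps)
  moreover have "0 \<le> a * u" "0 \<le> a * L" using a u by simp_all
  ultimately have "e * M + a * R + u - a * (e * M) - a * (a * R) - a * u \<le> L - a * L"
    using weighted_err_bound[OF a(1) u(1) R] u by linarith
  then have "(1 - a) * (e * M + a * R + u) \<le> (1 - a) * L" by (simp add: algebra_simps)
  moreover have "0 < 1 - a" using a by linarith
  ultimately show ?thesis by simp
qed

lemma level_bound_lt_of_large_max:
  fixes a e R M L u :: real
  assumes a: "0 \<le> a" "0 \<le> e" "a + e \<le> 1/4" and u: "0 \<le> u" "30 * u < L"
    and R: "(1 - a) * R \<le> e * M + L/10 - 2 * u"
    and M: "8/5 * L \<le> M"
  shows "e * M + a * R + u < M - L"
proof -
  have "a * M + e * M \<le> M / 4"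
    using mult_right_mono[OF a(3), of M] M u by (simp add: algebra_simps)
  moreover have "0 \<le> a * u" "0 \<le> a * L" using a u by simp_all
  ultimately have "e * M + a * R + u - a * (e * M) - a * (a * R) - a * u < M - L - a * M + a * L"
    using weighted_err_bound[OF a(1) u(1) R] M u by linarith
  then have "(1 - a) * (e * M + a * R + u) < (1 - a) * (M - L)" by (simp add: algebra_simps)
  moreover have "0 < 1 - a" using a by linarith
  ultimately show ?thesis by simp
qed

text \<open>\<open>lb\<close> stands for \<open>\<lambda>\<close>-bar, \<open>u\<close> bounds the noise correlations (it is \<open>\<lambda>\<^sub>u\<close> on \<open>\<E>\<close>), and \<open>err\<close>,
  \<open>max_missed\<close> are the quantities \<open>R\<close>, \<open>M\<close> above.\<close>

locale sna_one_step =
  fixes n p :: nat and X :: "nat \<Rightarrow> nat \<Rightarrow> real"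
    and y \<eta> \<beta>dag b d b' d' :: "nat \<Rightarrow> real"
    and lam lb u :: real
  assumes n_pos: "0 < n"
    and col_norm: "\<forall>j<p. (\<Sum>i<n. (X i j)\<^sup>2) = real n"
    and model: "\<forall>i<n. y i = (\<Sum>j<p. X i j * \<beta>dag j) + \<eta> i"
    and noise_bound: "\<forall>j<p. \<bar>\<Sum>i<n. X i j * \<eta> i\<bar> / real n \<le> u"
    and noise_bound_nonneg: "0 \<le> u"
    and lb_le_lam: "lb \<le> lam"
    and step: "sna_step n p X y lam lb b d b' d'"
    and active_subset_support: "active_set p lam b d \<subseteq> supp_set p \<beta>dag"
begin

abbreviation "active \<equiv> active_set p lam b d"
abbreviation "active' \<equiv> active_set p lam b' d'"
abbreviation "support \<equiv> supp_set p \<beta>dag"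
abbreviation "missed \<equiv> support - active"
abbreviation "coh \<equiv> mutual_coh n p X"
abbreviation "active_weight \<equiv> coh * real (card active)"
abbreviation "missed_weight \<equiv> coh * real (card missed)"
abbreviation "err \<equiv> max_abs_on (\<lambda>l. b' l - \<beta>dag l) active"
abbreviation "max_missed \<equiv> max_abs_on \<beta>dag missed"
abbreviation "noise_corr j \<equiv> \<Sum>i<n. X i j * \<eta> i"

lemma finite_support: "finite support"
  by (simp add: supp_set_def)

lemma finite_active: "finite active"
  using finite_subset[OF active_subset_support finite_support] .

lemma support_lt: "l \<in> support \<Longrightarrow> l < p"
  by (simp add: supp_set_def)

lemma active_lt: "l \<in> active \<Longrightarrow> l < p"
  by (simp add: active_set_def)

lemma card_support: "card support = card active + card missed"
  using card_Diff_subset[OF finite_active active_subset_support]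
    card_mono[OF finite_support active_subset_support] by simp

lemma abs_err_le: "l \<in> active \<Longrightarrow> \<bar>b' l - \<beta>dag l\<bar> \<le> err"
  using abs_le_max_abs_on[OF finite_active] .

lemma abs_missed_le: "l \<in> missed \<Longrightarrow> \<bar>\<beta>dag l\<bar> \<le> max_missed"
  using abs_le_max_abs_on[of missed] finite_support by blast

lemma err_nonneg: "0 \<le> err"
  using max_abs_on_nonneg[OF finite_active] .

lemma max_missed_nonneg: "0 \<le> max_missed"
  using max_abs_on_nonneg finite_support by blast

lemma weights_nonneg: "0 \<le> active_weight" "0 \<le> missed_weight"
  using mutual_coh_nonneg[of n p X] by simp_all

lemma abs_noise_corr_le: "j < p \<Longrightarrow> \<bar>noise_corr j\<bar> \<le> real n * u"
  using noise_bound n_pos by (simp add: divide_le_eq mult.commute)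

lemma step_inactive_zero: "j < p \<Longrightarrow> j \<notin> active \<Longrightarrow> b' j = 0"
  and step_dual_active: "j \<in> active \<Longrightarrow> d' j = (lam - lb) * sgn (b j + d j)"
  and step_normal_eq:
    "j \<in> active \<Longrightarrow> (\<Sum>l\<in>active. gram n X j l * b' l) = (\<Sum>i<n. X i j * y i) - real n * d' j"
  and step_dual_inactive: "j < p \<Longrightarrow> j \<notin> active \<Longrightarrow>
    d' j = (\<Sum>i<n. X i j * (y i - (\<Sum>l\<in>active. X i l * b' l))) / real n"
  using step unfolding sna_step_def Let_def by auto

lemma abs_dual_active_le: "j \<in> active \<Longrightarrow> \<bar>d' j\<bar> \<le> lam - lb"
  using step_dual_active lb_le_lam by (simp add: abs_mult abs_sgn_eq mult_left_le)

lemma design_corr_y: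
  assumes "j < p"
  shows "(\<Sum>i<n. X i j * y i) = (\<Sum>l\<in>active. gram n X j l * \<beta>dag l)
    + (\<Sum>l\<in>missed. gram n X j l * \<beta>dag l) + noise_corr j"
proof -
  have "(\<Sum>i<n. X i j * y i) = (\<Sum>i<n. X i j * (\<Sum>l<p. X i l * \<beta>dag l)) + noise_corr j"
    using model by (simp add: distrib_left sum.distrib)
  also have "(\<Sum>i<n. X i j * (\<Sum>l<p. X i l * \<beta>dag l)) = (\<Sum>l<p. gram n X j l * \<beta>dag l)"
    by (rule sum_design_mult_eq_gram)
  also have "\<dots> = (\<Sum>l\<in>support. gram n X j l * \<beta>dag l)"
    by (rule sum.mono_neutral_right) (auto simp: supp_set_def)
  also have "\<dots> = (\<Sum>l\<in>active. gram n X j l * \<beta>dag l) + (\<Sum>l\<in>missed. gram n X j l * \<beta>dag l)"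
    unfolding sum.subset_diff[OF active_subset_support finite_support] by (rule add.commute)
  finally show ?thesis .
qed

lemma active_error_eq:
  assumes j: "j \<in> active"
  shows "real n * (b' j - \<beta>dag j) = (\<Sum>l\<in>missed. gram n X j l * \<beta>dag l) + noise_corr j
    - real n * d' j - (\<Sum>l\<in>active - {j}. gram n X j l * (b' l - \<beta>dag l))"
proof -
  have "(\<Sum>l\<in>active. gram n X j l * (b' l - \<beta>dag l))
      = (\<Sum>l\<in>missed. gram n X j l * \<beta>dag l) + noise_corr j - real n * d' j"
    using step_normal_eq[OF j] design_corr_y[OF active_lt[OF j]]
    by (simp add: right_diff_distrib sum_subtractf)
  moreover have "(\<Sum>l\<in>active. gram n X j l * (b' l - \<beta>dag l))
      = real n * (b' j - \<beta>dag j) + (\<Sum>l\<in>active - {j}. gram n X j l * (b' l - \<beta>dag l))"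
    using finite_active j gram_diag[OF col_norm active_lt[OF j]] by (simp add: sum.remove)
  ultimately show ?thesis by simp
qed

lemma inactive_level_eq:
  assumes "j < p" "j \<notin> active"
  shows "real n * (b' j + d' j) = (\<Sum>l\<in>missed. gram n X j l * \<beta>dag l)
    - (\<Sum>l\<in>active. gram n X j l * (b' l - \<beta>dag l)) + noise_corr j"
proof -
  have "real n * (b' j + d' j) = (\<Sum>i<n. X i j * (y i - (\<Sum>l\<in>active. X i l * b' l)))"
    using step_inactive_zero[OF assms] step_dual_inactive[OF assms] n_pos by simp
  also have "\<dots> = (\<Sum>i<n. X i j * y i) - (\<Sum>l\<in>active. gram n X j l * b' l)"
    by (simp add: right_diff_distrib sum_subtractf sum_design_mult_eq_gram)
  finally show ?thesis
    unfolding design_corr_y[OF assms(1)] by (simp add: right_diff_distrib sum_subtractf)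
qed

lemma gram_missed_le:
  assumes "j < p" "S \<subseteq> missed" "j \<notin> S"
  shows "\<bar>\<Sum>l\<in>S. gram n X j l * \<beta>dag l\<bar> \<le> real n * (missed_weight * max_missed)"
proof -
  have "\<bar>\<Sum>l\<in>S. gram n X j l * \<beta>dag l\<bar> \<le> real (card S) * (coh * real n * max_missed)"
    using assms support_lt abs_missed_le by (intro abs_gram_sum_le[OF n_pos]) auto
  also have "\<dots> \<le> real (card missed) * (coh * real n * max_missed)"
    using assms(2) finite_support mutual_coh_nonneg[of n p X] max_missed_nonneg
    by (intro mult_right_mono) (auto intro: card_mono)
  finally show ?thesis by (simp add: algebra_simps)
qed

lemma gram_err_le:
  assumes "j < p" "S \<subseteq> active" "j \<notin> S"
  shows "\<bar>\<Sum>l\<in>S. gram n X j l * (b' l - \<beta>dag l)\<bar> \<le> real n * (active_weight * err)"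
proof -
  have "\<bar>\<Sum>l\<in>S. gram n X j l * (b' l - \<beta>dag l)\<bar> \<le> real (card S) * (coh * real n * err)"
    using assms active_lt abs_err_le by (intro abs_gram_sum_le[OF n_pos]) auto
  also have "\<dots> \<le> real (card active) * (coh * real n * err)"
    using assms(2) finite_active mutual_coh_nonneg[of n p X] err_nonneg
    by (intro mult_right_mono) (auto intro: card_mono)
  finally show ?thesis by (simp add: algebra_simps)
qed

lemma err_le: "err \<le> active_weight * err + missed_weight * max_missed + u + (lam - lb)"
proof (rule max_abs_on_le[OF finite_active])
  show "0 \<le> active_weight * err + missed_weight * max_missed + u + (lam - lb)"
    using weights_nonneg err_nonneg max_missed_nonneg noise_bound_nonneg lb_le_lam by simp
next
  fix j assume j: "j \<in> active"
  have jp: "j < p" and "j \<notin> missed" "j \<notin> active - {j}" using j active_lt by auto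
  have "\<bar>real n * d' j\<bar> \<le> real n * (lam - lb)"
    using abs_dual_active_le[OF j] by (simp add: abs_mult mult_left_mono)
  then have "\<bar>real n * (b' j - \<beta>dag j)\<bar> \<le> real n * (missed_weight * max_missed) + real n * u
      + real n * (lam - lb) + real n * (active_weight * err)"
    using active_error_eq[OF j] gram_missed_le[OF jp order_refl \<open>j \<notin> missed\<close>]
      gram_err_le[OF jp _ \<open>j \<notin> active - {j}\<close>] abs_noise_corr_le[OF jp]
    by fastforce
  also have "\<dots> = real n * (active_weight * err + missed_weight * max_missed + u + (lam - lb))"
    by (simp add: algebra_simps)
  finally show "\<bar>b' j - \<beta>dag j\<bar> \<le> active_weight * err + missed_weight * max_missed + u + (lam - lb)"
    using n_pos by (simp add: abs_mult)
qed

lemma active_level_ge: "j \<in> active \<Longrightarrow> \<bar>\<beta>dag j\<bar> - err - (lam - lb) \<le> \<bar>b' j + d' j\<bar>"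
  using abs_err_le[of j] abs_dual_active_le[of j] by linarith

lemma off_support_level_le:
  assumes jp: "j < p" and j: "j \<notin> support"
  shows "\<bar>b' j + d' j\<bar> \<le> missed_weight * max_missed + active_weight * err + u"
proof -
  have "j \<notin> active" "j \<notin> missed" using j active_subset_support by auto
  then have "\<bar>real n * (b' j + d' j)\<bar>
      \<le> real n * (missed_weight * max_missed) + real n * (active_weight * err) + real n * u"
    using inactive_level_eq[OF jp] gram_missed_le[OF jp order_refl] gram_err_le[OF jp order_refl]
      abs_noise_corr_le[OF jp]
    by fastforce
  also have "\<dots> = real n * (missed_weight * max_missed + active_weight * err + u)"
    by (simp add: algebra_simps)
  finally show ?thesis using n_pos by (simp add: abs_mult)
qed

lemma missed_level_ge:
  assumes j: "j \<in> missed"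
  shows "\<bar>\<beta>dag j\<bar> - (missed_weight * max_missed + active_weight * err + u) \<le> \<bar>b' j + d' j\<bar>"
proof -
  have jp: "j < p" and "j \<notin> active" "j \<notin> missed - {j}" using j support_lt by auto
  have "(\<Sum>l\<in>missed. gram n X j l * \<beta>dag l)
      = real n * \<beta>dag j + (\<Sum>l\<in>missed - {j}. gram n X j l * \<beta>dag l)"
    using j finite_support gram_diag[OF col_norm jp] by (simp add: sum.remove)
  then have "real n * (b' j + d' j - \<beta>dag j) = (\<Sum>l\<in>missed - {j}. gram n X j l * \<beta>dag l)
      - (\<Sum>l\<in>active. gram n X j l * (b' l - \<beta>dag l)) + noise_corr j"
    using inactive_level_eq[OF jp \<open>j \<notin> active\<close>] by (simp add: algebra_simps)
  then have "\<bar>real n * (b' j + d' j - \<beta>dag j)\<bar>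
      \<le> real n * (missed_weight * max_missed) + real n * (active_weight * err) + real n * u"
    using gram_missed_le[OF jp _ \<open>j \<notin> missed - {j}\<close>] gram_err_le[OF jp order_refl \<open>j \<notin> active\<close>]
      abs_noise_corr_le[OF jp]
    by fastforce
  also have "\<dots> = real n * (missed_weight * max_missed + active_weight * err + u)"
    by (simp add: algebra_simps)
  finally have "\<bar>b' j + d' j - \<beta>dag j\<bar> \<le> missed_weight * max_missed + active_weight * err + u"
    using n_pos by (simp add: abs_mult)
  then show ?thesis by linarith
qed

end

locale sna_one_step_A1 = sna_one_step +
  assumes lb_eq: "lb = 9/10 * lam + 3 * u"
    and noise_small: "30 * u < lam"
    and coherence: "real (card support) * coh \<le> 1/4"
begin

lemma lam_pos: "0 < lam"
  using noise_small noise_bound_nonneg by linarith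

lemma weights_le: "active_weight + missed_weight \<le> 1/4"
  using coherence card_support by (simp add: algebra_simps)

lemma err_contraction: "(1 - active_weight) * err \<le> missed_weight * max_missed + lam/10 - 2 * u"
  using err_le lb_eq by (simp add: algebra_simps)

lemmas contraction_hyps = weights_nonneg weights_le noise_bound_nonneg

lemma err_lt_of_max_missed_lt: "max_missed < t * lam \<Longrightarrow> 8/5 \<le> t \<Longrightarrow> err < (t - 11/10) * lam"
  using err_bound_lt_of_small_max[OF contraction_hyps lam_pos err_contraction] .

lemma err_lt_of_max_missed_ge:
  assumes M: "8/5 * lam \<le> max_missed" and nonempty: "active \<noteq> {}"
  shows "err < max_missed - 11/10 * lam"
proof (rule err_bound_lt_of_large_max[OF contraction_hyps lam_pos err_contraction M])
  assume "active_weight = 0"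
  moreover have "card active \<noteq> 0" using nonempty finite_active by simp
  ultimately show "missed_weight = 0" by simp
qed

lemma level_bound_le_lam:
  "max_missed \<le> 13/5 * lam \<Longrightarrow> missed_weight * max_missed + active_weight * err + u \<le> lam"
  using level_bound_le_of_small_max[OF contraction_hyps noise_small err_contraction] .

lemma level_bound_lt:
  "8/5 * lam \<le> max_missed \<Longrightarrow> missed_weight * max_missed + active_weight * err + u < max_missed - lam"
  using level_bound_lt_of_large_max[OF contraction_hyps noise_small err_contraction] .

lemma active'_iff: "j \<in> active' \<longleftrightarrow> j < p \<and> lam < \<bar>b' j + d' j\<bar>"
  by (simp add: active_set_def)

lemma active'_subset_support:
  assumes "max_missed \<le> 13/5 * lam"
  shows "active' \<subseteq> support"
proof
  fix j assume j: "j \<in> active'"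
  show "j \<in> support"
  proof (rule ccontr)
    assume "j \<notin> support"
    then have "\<bar>b' j + d' j\<bar> \<le> lam"
      using off_support_level_le[of j] level_bound_le_lam[OF assms] j active'_iff by force
    then show False using j active'_iff by simp
  qed
qed

lemma S_set_subset_active':
  assumes S: "S_set p \<beta>dag lam t \<subseteq> active" and t: "8/5 \<le> t" "t \<le> 13/5"
  shows "S_set p \<beta>dag lam t \<subseteq> active'" and "active' \<subseteq> support"
proof -
  have M: "max_missed < t * lam"
  proof (rule max_abs_on_less)
    show "0 < t * lam" using t lam_pos by simp
    show "\<bar>\<beta>dag i\<bar> < t * lam" if "i \<in> missed" for i
      using that S support_lt[of i] by (force simp: S_set_def mult.commute)
  qed (use finite_support in blast)
  show "S_set p \<beta>dag lam t \<subseteq> active'"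
  proof
    fix j assume j: "j \<in> S_set p \<beta>dag lam t"
    then have "t * lam \<le> \<bar>\<beta>dag j\<bar>" "j < p" by (simp_all add: S_set_def mult.commute)
    then have "lam < \<bar>\<beta>dag j\<bar> - err - (lam - lb)"
      using err_lt_of_max_missed_lt[OF M t(1)] lb_eq noise_bound_nonneg by (simp add: algebra_simps)
    then show "j \<in> active'"
      using active_level_ge[of j] j S \<open>j < p\<close> active'_iff by fastforce
  qed
  have "t * lam \<le> 13/5 * lam" using t lam_pos by simp
  then show "active' \<subseteq> support" using M by (intro active'_subset_support) simp
qed

lemma max_missed_decreases:
  assumes "\<not> S_set p \<beta>dag lam (8/5) \<subseteq> active"
  shows "max_abs_on \<beta>dag (support - active') < max_missed"
proof -
  obtain j0 where j0: "j0 \<in> S_set p \<beta>dag lam (8/5)" "j0 \<notin> active" using assms by blast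
  then have "j0 \<in> missed" using lam_pos by (auto simp: S_set_def supp_set_def)
  then have M: "8/5 * lam \<le> max_missed"
    using abs_missed_le[of j0] j0 by (simp add: S_set_def mult.commute)
  have "\<bar>\<beta>dag i\<bar> < max_missed" if i: "i \<in> support - active'" for i
  proof (rule ccontr)
    assume "\<not> \<bar>\<beta>dag i\<bar> < max_missed"
    then have big: "max_missed \<le> \<bar>\<beta>dag i\<bar>" by simp
    have ip: "i < p" using i support_lt by blast
    have "lam < \<bar>b' i + d' i\<bar>"
    proof (cases "i \<in> active")
      case True
      then have "err < max_missed - 11/10 * lam" using err_lt_of_max_missed_ge[OF M] by blast
      then show ?thesis
        using active_level_ge[OF True] big lb_eq noise_bound_nonneg by linarith
    next
      case False
      then show ?thesis using missed_level_ge[of i] level_bound_lt[OF M] big i by force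
    qed
    then show False using i ip active'_iff by blast
  qed
  then show ?thesis
    using M lam_pos finite_support by (intro max_abs_on_less) auto
qed

end

lemma lambda_u_nonneg_of_noise_bound:
  assumes "\<forall>j<p. \<bar>\<Sum>i<n. X i j * \<eta> i\<bar> / real n \<le> lambda_u \<sigma> n p"
  shows "0 \<le> lambda_u \<sigma> n p"
proof (cases "p = 0")
  case True
  then show ?thesis by (simp add: lambda_u_def)
next
  case False
  then show ?thesis using assms by (meson abs_ge_zero divide_nonneg_nonneg gr0I of_nat_0_le_iff order_trans)
qed

theorem mainTheorem11:
  fixes n p :: nat and X :: "nat \<Rightarrow> nat \<Rightarrow> real"
    and y \<eta> \<beta>dag :: "nat \<Rightarrow> real"
    and \<sigma> lam :: real
    and b d b' d' :: "nat \<Rightarrow> real"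
  assumes n_pos: "0 < n"
    and col_norm: "\<forall>j<p. (\<Sum>i<n. (X i j)\<^sup>2) = real n"
    and model: "\<forall>i<n. y i = (\<Sum>j<p. X i j * \<beta>dag j) + \<eta> i"
    and A1: "real (card (supp_set p \<beta>dag)) * mutual_coh n p X \<le> 1/4"
    and event: "\<forall>j<p. \<bar>\<Sum>i<n. X i j * \<eta> i\<bar> / real n \<le> lambda_u \<sigma> n p"
    and lam_pos: "0 < lam"
    and lambar: "9/10 * lam + delta_u \<sigma> n p < lam"
    and step: "sna_step n p X y lam (9/10 * lam + delta_u \<sigma> n p) b d b' d'"
  shows
    "(\<forall>\<tau> \<in> {8/5, 8/5 + 1}.
        S_set p \<beta>dag lam \<tau> \<subseteq> active_set p lam b d \<and> active_set p lam b d \<subseteq> supp_set p \<beta>dag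
        \<longrightarrow> S_set p \<beta>dag lam \<tau> \<subseteq> active_set p lam b' d' \<and> active_set p lam b' d' \<subseteq> supp_set p \<beta>dag)
     \<and>
     (S_set p \<beta>dag lam (8/5 + 1) \<subseteq> active_set p lam b d \<and> active_set p lam b d \<subseteq> supp_set p \<beta>dag
        \<and> \<not> S_set p \<beta>dag lam (8/5) \<subseteq> active_set p lam b d
      \<longrightarrow> max_abs_on \<beta>dag (supp_set p \<beta>dag - active_set p lam b d)
          > max_abs_on \<beta>dag (supp_set p \<beta>dag - active_set p lam b' d'))"
proof -
  have setting: "sna_one_step_A1 n p X y \<eta> \<beta>dag b d b' d' lam
      (9/10 * lam + delta_u \<sigma> n p) (lambda_u \<sigma> n p)"
    if "active_set p lam b d \<subseteq> supp_set p \<beta>dag"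
    using assms that lambda_u_nonneg_of_noise_bound[OF event]
    by (intro sna_one_step_A1.intro sna_one_step.intro sna_one_step_A1_axioms.intro)
      (auto simp: delta_u_def)
  have "S_set p \<beta>dag lam \<tau> \<subseteq> active_set p lam b' d' \<and> active_set p lam b' d' \<subseteq> supp_set p \<beta>dag"
    if "\<tau> \<in> {8/5, 8/5 + 1}" "S_set p \<beta>dag lam \<tau> \<subseteq> active_set p lam b d"
      "active_set p lam b d \<subseteq> supp_set p \<beta>dag" for \<tau> :: real
    using sna_one_step_A1.S_set_subset_active'[OF setting[OF that(3)] that(2)] that(1) by auto
  \<comment> \<open>Part (ii) does not need \<open>S\<^sub>\<lambda>\<^sub>,\<^sub>\<kappa>\<^sub>+\<^sub>1 \<subseteq> A\<^sup>k\<close>.\<close>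
  then show ?thesis
    using sna_one_step_A1.max_missed_decreases[OF setting] by blast
qed

end
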